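(* For $k=3$ and $d\in[6.74,7.5]$, the equation $\Psi_d(x)=x$ has a unique solution in $[\frac38,\frac12]$.
   Context: For $k=3$: $\hat\Psi(x)=\frac{1-2x^{2}}{1-x^{2}}$, $\dot\Psi(v)=\frac{1-v^{d-1}}{2-v^{d-1}}$, $\Psi_d=\dot\Psi\circ\hat\Psi$ ($d$ real). *)

theory Defs
  imports Complex_Main
begin

definition Psi_hat :: "real \<Rightarrow> real" where
  "Psi_hat x = (1 - 2 * x\<^sup>2) / (1 - x\<^sup>2)"

definition Psi_dot :: "real \<Rightarrow> real \<Rightarrow> real" where
  "Psi_dot d v = (1 - v powr (d - 1)) / (2 - v powr (d - 1))"

definition Psi :: "real \<Rightarrow> real \<Rightarrow> real" where
  "Psi d = Psi_dot d \<circ> Psi_hat"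

end

theory Submission
  imports Defs
begin

(* Since w \<mapsto> (1 - w)/(2 - w) is inverted by x \<mapsto> (1 - 2x)/(1 - x), a point x of
   [3/8, 1/2] is fixed by Psi_d exactly when Psi_hat(x)^(d-1) = (1 - 2x)/(1 - x).
   At x = 1/2 the left side is larger. On [3/8, 21/50] it is smaller: both sides decrease, so
   comparing Psi_hat at the left end of each of five subintervals, raised to 57/10 <= d - 1,
   with the right side at the right end is an exact rational computation. On [21/50, 1/2)
   the logarithmic difference (d-1) ln Psi_hat(x) - ln((1 - 2x)/(1 - x)) is strictly
   increasing because d - 1 <= 13/2 (it is not increasing near 3/8). The intermediate value
   theorem gives existence. *)

lemma square_less_half: "\<bar>x\<bar> \<le> 1/2 \<Longrightarrow> x\<^sup>2 < (1/2 :: real)"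
  using power_mono[of "\<bar>x\<bar>" "1/2" 2] by (simp add: power2_eq_square)

lemma Psi_hat_pos: "x\<^sup>2 < 1/2 \<Longrightarrow> 0 < Psi_hat x"
  by (simp add: Psi_hat_def)

lemma Psi_hat_le_one: "x\<^sup>2 < 1 \<Longrightarrow> Psi_hat x \<le> 1"
  by (simp add: Psi_hat_def)

lemma Psi_hat_antimono:
  fixes a x :: real
  assumes "0 \<le> a" "a \<le> x" "x < 1"
  shows "Psi_hat x \<le> Psi_hat a"
proof -
  have "a\<^sup>2 \<le> x\<^sup>2" using assms by (intro power_mono) auto
  moreover have "x\<^sup>2 < 1" using assms power_strict_mono[of x 1 2] by simp
  ultimately show ?thesis
    by (simp add: Psi_hat_def divide_simps) (simp add: algebra_simps)
qed

lemma Psi_hat_powr_pos_le_one: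
  fixes x t :: real
  assumes "x\<^sup>2 < 1/2" "0 \<le> t"
  shows "0 < Psi_hat x powr t" "Psi_hat x powr t \<le> 1"
  using assms Psi_hat_pos[of x] Psi_hat_le_one[of x] by (auto intro: powr_le1)

lemma moebius_eq_iff:
  fixes w x :: real
  assumes "w < 2" "x < 1"
  shows "(1 - w) / (2 - w) = x \<longleftrightarrow> w = (1 - 2*x) / (1 - x)"
    and "x < (1 - w) / (2 - w) \<longleftrightarrow> w < (1 - 2*x) / (1 - x)"
  using assms by (auto simp: field_simps)

lemma Psi_eq_self_iff:
  fixes d x :: real
  assumes "x\<^sup>2 < 1/2" "x < 1" "1 \<le> d"
  shows "Psi d x = x \<longleftrightarrow> Psi_hat x powr (d - 1) = (1 - 2*x) / (1 - x)"
    and "x < Psi d x \<longleftrightarrow> Psi_hat x powr (d - 1) < (1 - 2*x) / (1 - x)"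
proof -
  have "Psi_hat x powr (d - 1) < 2"
    using Psi_hat_powr_pos_le_one[of x "d - 1"] assms by simp
  then show "Psi d x = x \<longleftrightarrow> Psi_hat x powr (d - 1) = (1 - 2*x) / (1 - x)"
    and "x < Psi d x \<longleftrightarrow> Psi_hat x powr (d - 1) < (1 - 2*x) / (1 - x)"
    using moebius_eq_iff assms(2) by (simp_all add: Psi_def Psi_dot_def)
qed

lemma Psi_half_less: "1 \<le> d \<Longrightarrow> Psi d (1/2) < 1/2"
  using Psi_eq_self_iff[of "1/2" d] Psi_hat_powr_pos_le_one(1)[of "1/2" "d - 1"]
  by (simp add: power2_eq_square)

lemma continuous_on_Psi:
  assumes "1 \<le> d"
  shows "continuous_on {x. x\<^sup>2 < 1/2} (Psi d)"
proof -
  have "continuous_on {x. x\<^sup>2 < 1/2} Psi_hat"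
    unfolding Psi_hat_def by (intro continuous_intros) auto
  moreover have "Psi_hat x \<noteq> 0" "Psi_hat x powr (d - 1) \<noteq> 2" if "x\<^sup>2 < 1/2" for x
    using that assms Psi_hat_pos[of x] Psi_hat_powr_pos_le_one[of x "d - 1"] by auto
  ultimately show ?thesis
    unfolding Psi_def Psi_dot_def o_def by (intro continuous_intros) auto
qed

lemma powr_divide_less_of_power_less:
  fixes v c :: real and p q :: nat
  assumes "0 < v" "0 \<le> c" "0 < q" "v ^ p < c ^ q"
  shows "v powr (p / q) < c"
proof (rule power_less_imp_less_base)
  have "(v powr (p / q)) ^ q = v ^ p"
    using assms by (simp add: powr_power powr_realpow)
  then show "(v powr (p / q)) ^ q < c ^ q" using assms(4) by simp
qed (use assms in simp)

lemma Psi_hat_powr_less_on_subinterval: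
  fixes a b s t x :: real
  assumes "0 \<le> a" "a \<le> x" "x \<le> b" "b \<le> 1/2" "0 \<le> s" "s \<le> t"
    and at_ends: "Psi_hat a powr s < (1 - 2*b) / (1 - b)"
  shows "Psi_hat x powr t < (1 - 2*x) / (1 - x)"
proof -
  have x2: "x\<^sup>2 < 1/2" using assms by (intro square_less_half) auto
  have "Psi_hat x powr t \<le> Psi_hat x powr s"
    using assms Psi_hat_pos[OF x2] Psi_hat_le_one[of x] x2 by (intro powr_mono') auto
  also have "\<dots> \<le> Psi_hat a powr s"
    using assms Psi_hat_pos[OF x2] Psi_hat_antimono[of a x] by (intro powr_mono2) auto
  also have "\<dots> < (1 - 2*b) / (1 - b)"
    by (fact at_ends)
  also have "\<dots> \<le> (1 - 2*x) / (1 - x)"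
    using assms by (simp add: field_simps)
  finally show ?thesis .
qed

lemma Psi_hat_powr_less_left:
  fixes t x :: real
  assumes x: "3/8 \<le> x" "x \<le> 21/50" and t: "57/10 \<le> t"
  shows "Psi_hat x powr t < (1 - 2*x) / (1 - x)"
proof -
  have on_subinterval: ?thesis
    if "3/8 \<le> a" "a \<le> x" "x \<le> b" "b \<le> 1/2"
      and "Psi_hat a ^ 57 < ((1 - 2*b) / (1 - b)) ^ 10" for a b :: real
  proof (rule Psi_hat_powr_less_on_subinterval[of a x b "57/10"])
    have "0 < Psi_hat a" using that by (intro Psi_hat_pos square_less_half) auto
    then show "Psi_hat a powr (57/10) < (1 - 2*b) / (1 - b)"
      using powr_divide_less_of_power_less[of "Psi_hat a" "(1 - 2*b) / (1 - b)" 10 57] that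
      by simp
  qed (use that t in auto)
  note exact_arith = Psi_hat_def power2_eq_square power_divide divide_less_eq less_divide_eq
  consider "x \<le> 77/200" | "77/200 \<le> x" "x \<le> 79/200" | "79/200 \<le> x" "x \<le> 81/200"
    | "81/200 \<le> x" "x \<le> 413/1000" | "413/1000 \<le> x" by linarith
  then show ?thesis
  proof cases
    case 1
    show ?thesis by (rule on_subinterval[of "3/8" "77/200"])
      (use x 1 in \<open>simp_all add: exact_arith\<close>)
  next
    case 2
    show ?thesis by (rule on_subinterval[of "77/200" "79/200"])
      (use x 2 in \<open>simp_all add: exact_arith\<close>)
  next
    case 3
    show ?thesis by (rule on_subinterval[of "79/200" "81/200"])
      (use x 3 in \<open>simp_all add: exact_arith\<close>)
  next
    case 4
    show ?thesis by (rule on_subinterval[of "81/200" "413/1000"])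
      (use x 4 in \<open>simp_all add: exact_arith\<close>)
  next
    case 5
    show ?thesis by (rule on_subinterval[of "413/1000" "21/50"])
      (use x 5 in \<open>simp_all add: exact_arith\<close>)
  qed
qed

definition Psi_gap :: "real \<Rightarrow> real \<Rightarrow> real" where
  "Psi_gap t x = t * ln (Psi_hat x) - ln ((1 - 2*x) / (1 - x))"

lemma Psi_eq_self_iff_gap:
  fixes d x :: real
  assumes "x\<^sup>2 < 1/2" "x < 1/2" "1 \<le> d"
  shows "Psi d x = x \<longleftrightarrow> Psi_gap (d - 1) x = 0"
proof -
  have pos: "0 < Psi_hat x powr (d - 1)" "0 < (1 - 2*x) / (1 - x)"
    using Psi_hat_powr_pos_le_one(1)[of x "d - 1"] assms by auto
  have "Psi d x = x \<longleftrightarrow> Psi_hat x powr (d - 1) = (1 - 2*x) / (1 - x)"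
    using Psi_eq_self_iff(1)[of x d] assms by simp
  also have "\<dots> \<longleftrightarrow> ln (Psi_hat x powr (d - 1)) = ln ((1 - 2*x) / (1 - x))"
    using pos by (rule ln_inj_iff[symmetric])
  also have "\<dots> \<longleftrightarrow> Psi_gap (d - 1) x = 0"
    using Psi_hat_pos[of x] assms by (simp add: Psi_gap_def)
  finally show ?thesis .
qed

lemma DERIV_Psi_gap:
  fixes t x :: real
  assumes "x\<^sup>2 < 1/2" "x < 1/2"
  shows "(Psi_gap t has_real_derivative
           1 / ((1 - 2*x) * (1 - x)) - 2 * t * x / ((1 - x\<^sup>2) * (1 - 2*x\<^sup>2))) (at x)"
proof -
  have "0 < 1 - 2*x\<^sup>2" "0 < 1 - x\<^sup>2" "0 < 1 - 2*x" "0 < 1 - x"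
    using assms by auto
  then show ?thesis
    unfolding Psi_gap_def[abs_def] Psi_hat_def
    by (auto intro!: derivative_eq_intros simp: divide_simps) (simp add: algebra_simps)
qed

lemma Psi_gap_deriv_numerator_pos:
  fixes t x :: real
  assumes "21/50 \<le> x" "x < 1/2" "0 \<le> t" "t \<le> 13/2"
  shows "2 * t * x * (1 - 2*x) * (1 - x) < (1 - x\<^sup>2) * (1 - 2*x\<^sup>2)"
proof -
  have "2 * t * (x * (1 - 2*x) * (1 - x)) \<le> 13 * (x * (1 - 2*x) * (1 - x))"
    using assms by (intro mult_right_mono) auto
  also have "\<dots> < (1 - x\<^sup>2) * (1 - 2*x\<^sup>2)"
  proof -
    have "(1 - x\<^sup>2) * (1 - 2*x\<^sup>2) - 13 * (x * (1 - 2*x) * (1 - x))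
        = (1 - x) * (1 - 12*x + 24*x\<^sup>2 - 2*x^3)"
      by (simp add: algebra_simps power2_eq_square power3_eq_cube)
    moreover have "0 < 1 - 12*x + 24*x\<^sup>2 - 2*x^3"
    proof -
      have "0 \<le> (x - 21/50) * (23*x - 117/50)" "0 \<le> x\<^sup>2 * (1 - 2*x)"
        using assms by (intro mult_nonneg_nonneg; simp)+
      moreover have "(x - 21/50) * (23*x - 117/50) = 23*x\<^sup>2 - 12*x + 2457/2500"
        by (simp add: field_simps power2_eq_square)
      moreover have "x\<^sup>2 * (1 - 2*x) = x\<^sup>2 - 2*x^3"
        by (simp add: algebra_simps power2_eq_square power3_eq_cube)
      ultimately show ?thesis by linarith
    qed
    then have "0 < (1 - x) * (1 - 12*x + 24*x\<^sup>2 - 2*x^3)"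
      using assms by simp
    ultimately show ?thesis by linarith
  qed
  finally show ?thesis by (simp add: mult.assoc)
qed

lemma strict_mono_on_Psi_gap:
  fixes t :: real
  assumes "0 \<le> t" "t \<le> 13/2"
  shows "strict_mono_on {21/50..<1/2} (Psi_gap t)"
proof (rule strict_mono_onI)
  fix a b :: real
  assume "a \<in> {21/50..<1/2}" "b \<in> {21/50..<1/2}" "a < b"
  then show "Psi_gap t a < Psi_gap t b"
  proof (intro DERIV_pos_imp_increasing[OF \<open>a < b\<close>])
    fix x assume "a \<le> x" "x \<le> b"
    with \<open>a \<in> _\<close> \<open>b \<in> _\<close> have x: "21/50 \<le> x" "x < 1/2" by auto
    then have "x\<^sup>2 < (1/2)\<^sup>2" by (intro power_strict_mono) auto
    then have x2: "x\<^sup>2 < 1/4" by (simp add: power2_eq_square)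
    have "2 * t * x / ((1 - x\<^sup>2) * (1 - 2*x\<^sup>2)) < 1 / ((1 - 2*x) * (1 - x))"
      using Psi_gap_deriv_numerator_pos[OF x assms] x x2 by (simp add: divide_simps)
    then show "\<exists>y. (Psi_gap t has_real_derivative y) (at x) \<and> 0 < y"
      using DERIV_Psi_gap[of x t] x x2 by auto
  qed
qed

lemma self_less_Psi_left:
  fixes d x :: real
  assumes "67/10 \<le> d" "3/8 \<le> x" "x \<le> 21/50"
  shows "x < Psi d x"
  using Psi_eq_self_iff(2)[of x d] Psi_hat_powr_less_left[of x "d - 1"] square_less_half[of x]
    assms by auto

lemma Psi_fixed_point_location:
  fixes d x :: real
  assumes "67/10 \<le> d" "x \<in> {3/8..1/2}" "Psi d x = x"
  shows "x \<in> {21/50<..<1/2}"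
proof -
  have "\<not> x \<le> 21/50" using self_less_Psi_left[of d x] assms by auto
  moreover have "x \<noteq> 1/2" using Psi_half_less[of d] assms by force
  ultimately show ?thesis using assms by auto
qed

lemma Psi_fixed_point_exists:
  fixes d :: real
  assumes "67/10 \<le> d"
  shows "\<exists>x \<in> {3/8..1/2}. Psi d x = x"
proof -
  have "continuous_on {3/8..1/2} (Psi d)"
    using assms square_less_half
    by (intro continuous_on_subset[OF continuous_on_Psi]) auto
  then have "continuous_on {3/8..1/2} (\<lambda>x. x - Psi d x)"
    by (intro continuous_intros)
  moreover have "3/8 - Psi d (3/8) \<le> 0" "0 \<le> 1/2 - Psi d (1/2)"
    using self_less_Psi_left[of d "3/8"] Psi_half_less[of d] assms by auto
  ultimately obtain x where "x \<in> {3/8..1/2}" "x - Psi d x = 0"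
    using IVT'[of "\<lambda>x. x - Psi d x" "3/8" 0 "1/2"] by auto
  then show ?thesis by (metis eq_iff_diff_eq_0)
qed

theorem lemma4p1:
  fixes d :: real
  assumes "6.74 \<le> d" and "d \<le> 7.5"
  shows "\<exists>!x. x \<in> {3/8..1/2} \<and> Psi d x = x"
proof -
  have d: "67/10 \<le> d" "d - 1 \<le> 13/2"
    using assms by simp_all
  have gap_zero: "Psi_gap (d - 1) x = 0" if "x \<in> {3/8..1/2}" "Psi d x = x" for x
    using Psi_eq_self_iff_gap[of x d] Psi_fixed_point_location[OF d(1) that]
      square_less_half[of x] d(1) that by simp
  have inj: "inj_on (Psi_gap (d - 1)) {21/50..<1/2}"
    using d by (intro strict_mono_on_imp_inj_on strict_mono_on_Psi_gap) auto
  have "x = y"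
    if "x \<in> {3/8..1/2}" "Psi d x = x" "y \<in> {3/8..1/2}" "Psi d y = y" for x y
    using inj_onD[OF inj, of x y] Psi_fixed_point_location[OF d(1)] gap_zero that by force
  with Psi_fixed_point_exists[OF d(1)] show ?thesis by blast
qed

end
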